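(* Let $X$ be a Banach ideal space over a $\sigma$-finite measure space $(\Omega,\Sigma,\mu)$ with the semi-Fatou property such that $\operatorname{supp}(X_a)=\operatorname{supp}(X)$. Then $X$ contains a lattice isometric copy of $\ell_\infty$ if and only if there exists $f\in X$ with $\|f\|_X=\operatorname{dist}_X(f,X_a)=1$.
   Context: A Banach ideal space $X$ on a complete $\sigma$-finite measure space $(\Omega,\Sigma,\mu)$ is a Banach space $X\subset L_0(\Omega,\Sigma,\mu)$ (real measurable functions modulo a.e. equality) such that if $|f|\le|g|$ a.e., $f\in L_0$ and $g\in X$, then $f\in X$ and $\|f\|_X\le\|g\|_X$. An element $x\in X$ is order continuous if for every sequence $0\le x_n\le|x|$ with $x_n\downarrow 0$ (decreasing with infimum $0$) one has $\|x_n\|_X\to0$; $X_a$ denotes the closed ideal of all order continuous elements of $X$. The support $\operatorname{supp}(Y)$ of a subspace $Y\subset L_0$ is the smallest measurable set $A$ (up to null sets) with $f\chi_{\Omega\setminus A}=0$ for all $f\in Y$. $X$ has the semi-Fatou property if $0\le x_n\uparrow x$ with $x_n,x\in X$ implies $\|x_n\|_X\to\|x\|_X$. $\operatorname{dist}_X(f,M)=\inf\{\|f-m\|_X: m\in M\}$. "$X$ contains a lattice isometric copy of $\ell_\infty$" means there is a linear isometric embedding $T:\ell_\infty\to X$ which is a lattice homomorphism (preserves the lattice operations). *)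

theory Defs
  imports "HOL-Analysis.Analysis"
begin

text \<open>Elements of L0 are represented by real-valued Borel measurable functions;
  equality in L0 is equality almost everywhere.\<close>

definition complete_sigma_finite :: "'a measure \<Rightarrow> bool" where
  "complete_sigma_finite M \<longleftrightarrow> sigma_finite_measure M \<and>
     (\<forall>A B. B \<in> null_sets M \<longrightarrow> A \<subseteq> B \<longrightarrow> A \<in> sets M)"

definition banach_ideal_space ::
  "'a measure \<Rightarrow> ('a \<Rightarrow> real) set \<Rightarrow> (('a \<Rightarrow> real) \<Rightarrow> real) \<Rightarrow> bool" where
  "banach_ideal_space M X N \<longleftrightarrow>
     X \<subseteq> borel_measurable M \<and>
     (\<lambda>_. 0) \<in> X \<and>
     (\<forall>f\<in>X. \<forall>g\<in>X. (\<lambda>w. f w + g w) \<in> X) \<and>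
     (\<forall>c. \<forall>f\<in>X. (\<lambda>w. c * f w) \<in> X) \<and>
     (\<forall>f\<in>X. N f \<ge> 0) \<and>
     (\<forall>f\<in>X. N f = 0 \<longleftrightarrow> (AE w in M. f w = 0)) \<and>
     (\<forall>f\<in>X. \<forall>g\<in>X. N (\<lambda>w. f w + g w) \<le> N f + N g) \<and>
     (\<forall>c. \<forall>f\<in>X. N (\<lambda>w. c * f w) = \<bar>c\<bar> * N f) \<and>
     \<comment> \<open>completeness\<close>
     (\<forall>u. (\<forall>n. u n \<in> X) \<longrightarrow>
        (\<forall>e>0. \<exists>K. \<forall>m\<ge>K. \<forall>n\<ge>K. N (\<lambda>w. u m w - u n w) < e) \<longrightarrow>
        (\<exists>f\<in>X. (\<lambda>n. N (\<lambda>w. u n w - f w)) \<longlonglongrightarrow> 0)) \<and>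
     \<comment> \<open>ideal property\<close>
     (\<forall>f g. f \<in> borel_measurable M \<longrightarrow> g \<in> X \<longrightarrow> (AE w in M. \<bar>f w\<bar> \<le> \<bar>g w\<bar>) \<longrightarrow>
        f \<in> X \<and> N f \<le> N g)"

text \<open>x is order continuous: for every sequence 0 \<le> x_n \<le> |x| decreasing to 0
  (in L0, i.e. a.e. pointwise, infimum of a countable decreasing sequence in L0
  being the a.e. pointwise infimum), N x_n \<rightarrow> 0.\<close>
definition order_continuous ::
  "'a measure \<Rightarrow> ('a \<Rightarrow> real) set \<Rightarrow> (('a \<Rightarrow> real) \<Rightarrow> real) \<Rightarrow> ('a \<Rightarrow> real) \<Rightarrow> bool" where
  "order_continuous M X N x \<longleftrightarrow> x \<in> X \<and>
     (\<forall>xs. (\<forall>n. xs n \<in> borel_measurable M) \<longrightarrow>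
        (\<forall>n. AE w in M. 0 \<le> xs n w \<and> xs n w \<le> \<bar>x w\<bar>) \<longrightarrow>
        (\<forall>n. AE w in M. xs (Suc n) w \<le> xs n w) \<longrightarrow>
        (AE w in M. (\<lambda>n. xs n w) \<longlonglongrightarrow> 0) \<longrightarrow>
        (\<lambda>n. N (xs n)) \<longlonglongrightarrow> 0)"

definition order_cont_part ::
  "'a measure \<Rightarrow> ('a \<Rightarrow> real) set \<Rightarrow> (('a \<Rightarrow> real) \<Rightarrow> real) \<Rightarrow> ('a \<Rightarrow> real) set" where
  "order_cont_part M X N = {x. order_continuous M X N x}"

definition is_support :: "'a measure \<Rightarrow> ('a \<Rightarrow> real) set \<Rightarrow> 'a set \<Rightarrow> bool" where
  "is_support M Y A \<longleftrightarrow> A \<in> sets M \<and>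
     (\<forall>f\<in>Y. AE w in M. w \<notin> A \<longrightarrow> f w = 0) \<and>
     (\<forall>B\<in>sets M. (\<forall>f\<in>Y. AE w in M. w \<notin> B \<longrightarrow> f w = 0) \<longrightarrow> (AE w in M. w \<in> A \<longrightarrow> w \<in> B))"

definition semi_fatou ::
  "'a measure \<Rightarrow> ('a \<Rightarrow> real) set \<Rightarrow> (('a \<Rightarrow> real) \<Rightarrow> real) \<Rightarrow> bool" where
  "semi_fatou M X N \<longleftrightarrow>
     (\<forall>xs x. (\<forall>n. xs n \<in> X) \<longrightarrow> x \<in> X \<longrightarrow>
        (\<forall>n. AE w in M. 0 \<le> xs n w \<and> xs n w \<le> xs (Suc n) w) \<longrightarrow>
        (AE w in M. (\<lambda>n. xs n w) \<longlonglongrightarrow> x w) \<longrightarrow>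
        (\<lambda>n. N (xs n)) \<longlonglongrightarrow> N x)"

definition dist_X ::
  "(('a \<Rightarrow> real) \<Rightarrow> real) \<Rightarrow> ('a \<Rightarrow> real) \<Rightarrow> ('a \<Rightarrow> real) set \<Rightarrow> real" where
  "dist_X N f Y = (INF m\<in>Y. N (\<lambda>w. f w - m w))"

definition lattice_isometric_linf ::
  "'a measure \<Rightarrow> ('a \<Rightarrow> real) set \<Rightarrow> (('a \<Rightarrow> real) \<Rightarrow> real) \<Rightarrow> ((nat \<Rightarrow> real) \<Rightarrow> ('a \<Rightarrow> real)) \<Rightarrow> bool" where
  "lattice_isometric_linf M X N T \<longleftrightarrow>
     (\<forall>s. bounded (range s) \<longrightarrow> T s \<in> X) \<and>
     (\<forall>s t. bounded (range s) \<longrightarrow> bounded (range t) \<longrightarrow>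
        (AE w in M. T (\<lambda>n. s n + t n) w = T s w + T t w)) \<and>
     (\<forall>c s. bounded (range s) \<longrightarrow> (AE w in M. T (\<lambda>n. c * s n) w = c * T s w)) \<and>
     (\<forall>s t. bounded (range s) \<longrightarrow> bounded (range t) \<longrightarrow>
        (AE w in M. T (\<lambda>n. max (s n) (t n)) w = max (T s w) (T t w))) \<and>
     (\<forall>s. bounded (range s) \<longrightarrow> N (T s) = (SUP n. \<bar>s n\<bar>))"

end

theory Submission
  imports Defs
begin

(* If T embeds l_infinity, then u = T 1 dominates the pairwise disjoint norm-one elements
   T e_n.  For an order continuous g, the part of |g| living on the tails of the supports of the
   T e_n tends to zero in norm, while T e_n is dominated by |u - g| plus such a tail; hence
   N (u - g) >= 1, i.e. dist (u, X_a) = 1.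

   Conversely, let N f = dist (f, X_a) = 1 and F = |f|.  As supp X_a = supp X and the measure is
   sigma-finite, an exhaustion argument gives an increasing sequence B_n with F chi_(B_n) in X_a
   and F = 0 a.e. outside the union of the B_n.  Then F chi_(-B_n) has norm 1 for every n, and by
   the semi-Fatou property the blocks F chi_(B_m - B_n) have norm close to 1 for large m.  This
   yields disjoint sets D_j with N (F chi_(D_j)) --> 1.  Splitting the indices j into infinitely
   many infinite classes k = fst (prod_decode j), the embedding multiplies F on each D_j by the
   k-th coordinate of the sequence. *)

lemma tendsto_consecutive_subseq:
  fixes a :: "nat \<Rightarrow> nat \<Rightarrow> 'b::metric_space"
  assumes lim: "\<And>n. (\<lambda>m. a n m) \<longlonglongrightarrow> l"
  obtains r where "strict_mono r" "(\<lambda>j. a (r j) (r (Suc j))) \<longlonglongrightarrow> l"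
proof -
  have "\<exists>m>n. dist (a n m) l < inverse (Suc n)" for n
  proof -
    have "eventually (\<lambda>m. n < m \<and> dist (a n m) l < inverse (Suc n)) sequentially"
      using lim[of n] by (intro eventually_conj eventually_gt_at_top) (simp add: tendsto_iff)
    then obtain K where "\<forall>m\<ge>K. n < m \<and> dist (a n m) l < inverse (Suc n)"
      unfolding eventually_sequentially by blast
    then show ?thesis
      by blast
  qed
  then obtain \<phi> where \<phi>: "\<And>n. n < \<phi> n" "\<And>n. dist (a n (\<phi> n)) l < inverse (Suc n)"
    by metis
  define r where "r j = (\<phi> ^^ j) 0" for j
  have r_Suc: "r (Suc j) = \<phi> (r j)" for j
    by (simp add: r_def)
  have "strict_mono r"
    by (simp add: strict_mono_Suc_iff r_Suc \<phi>(1))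
  have close: "dist (a (r j) (r (Suc j))) l \<le> inverse (Suc j)" for j
  proof -
    have "j \<le> r j"
      using \<open>strict_mono r\<close> by (rule strict_mono_imp_increasing)
    then have "inverse (Suc (r j)) \<le> inverse (real (Suc j))"
      by (intro le_imp_inverse_le) auto
    then show ?thesis
      using \<phi>(2)[of "r j"] unfolding r_Suc by linarith
  qed
  have "(\<lambda>j. dist (a (r j) (r (Suc j))) l) \<longlonglongrightarrow> 0"
    by (rule tendsto_sandwich[OF always_eventually always_eventually tendsto_const
          LIMSEQ_inverse_real_of_nat]) (use close in auto)
  then have "(\<lambda>j. a (r j) (r (Suc j))) \<longlonglongrightarrow> l"
    by (rule tendsto_dist_iff[THEN iffD2])
  with \<open>strict_mono r\<close> show thesis
    by (rule that)
qed

lemma AE_eventually_notin_tail_Union: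
  assumes "\<And>i j. i \<noteq> j \<Longrightarrow> AE w in M. w \<notin> A i \<or> w \<notin> A j"
  shows "AE w in M. eventually (\<lambda>k. w \<notin> (\<Union>j\<in>{k..}. A j)) sequentially"
proof -
  have "AE w in M. \<forall>i j. i \<noteq> j \<longrightarrow> w \<notin> A i \<or> w \<notin> A j"
    using assms by (simp add: AE_all_countable)
  then show ?thesis
  proof eventually_elim
    case (elim w)
    show ?case
    proof (cases "\<exists>i. w \<in> A i")
      case True
      then obtain i where "w \<in> A i"
        by blast
      then have "w \<notin> A j" if "i < j" for j
        using elim[rule_format, of i j] that by auto
      then show ?thesis
        unfolding eventually_sequentially by (intro exI[of _ "Suc i"]) auto
    qed simp
  qed
qed

lemma disjoint_family_incseq_diff:
  assumes B: "incseq B" and r: "mono r"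
  shows "disjoint_family (\<lambda>j. B (r (Suc j)) - B (r j))"
proof -
  have disj: "(B (r (Suc i)) - B (r i)) \<inter> (B (r (Suc j)) - B (r j)) = {}" if "i < j" for i j
  proof -
    have "B (r (Suc i)) \<subseteq> B (r j)"
      using that monoD[OF B monoD[OF r]] by simp
    then show ?thesis
      by auto
  qed
  show ?thesis
    unfolding disjoint_family_on_def
  proof (intro ballI impI)
    fix i j :: nat
    assume "i \<noteq> j"
    then show "(B (r (Suc i)) - B (r i)) \<inter> (B (r (Suc j)) - B (r j)) = {}"
      using disj[of i j] disj[of j i] by (cases "i < j") (simp_all add: Int_commute)
  qed
qed

lemma (in finite_measure) incseq_approx_SUP_measure:
  assumes S: "S \<subseteq> sets M" "{} \<in> S" "\<And>B C. B \<in> S \<Longrightarrow> C \<in> S \<Longrightarrow> B \<union> C \<in> S"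
  obtains B where "\<And>n. B n \<in> S" "incseq B"
    "\<And>n. (SUP C\<in>S. measure M C) - inverse (Suc n) < measure M (B n)"
proof -
  define \<sigma> where "\<sigma> = (SUP C\<in>S. measure M C)"
  have bdd: "bdd_above (measure M ` S)"
    by (rule bdd_aboveI[of _ "measure M (space M)"]) (use S(1) bounded_measure in auto)
  have "\<exists>C\<in>S. \<sigma> - inverse (Suc n) < measure M C" for n
  proof -
    have "\<sigma> - inverse (Suc n) < \<sigma>"
      by simp
    then show ?thesis
      unfolding \<sigma>_def using less_cSUP_iff[OF _ bdd] S(2) by blast
  qed
  then obtain C where C: "\<And>n. C n \<in> S" "\<And>n. \<sigma> - inverse (Suc n) < measure M (C n)"
    by metis
  define B where "B n = (\<Union>i\<le>n. C i)" for n
  have B_S: "B n \<in> S" for n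
  proof (induction n)
    case (Suc n)
    have "B (Suc n) = B n \<union> C (Suc n)"
      by (auto simp: B_def atMost_Suc)
    then show ?case
      using S(3)[OF Suc C(1)] by simp
  qed (simp add: B_def C(1))
  moreover have "incseq B"
    unfolding incseq_def B_def by (intro allI impI UN_mono) auto
  moreover have "\<sigma> - inverse (Suc n) < measure M (B n)" for n
  proof -
    have "measure M (C n) \<le> measure M (B n)"
      using B_S[of n] S(1) by (intro finite_measure_mono) (auto simp: B_def)
    then show ?thesis
      using C(2)[of n] by linarith
  qed
  ultimately show thesis
    using that unfolding \<sigma>_def by blast
qed

lemma (in finite_measure) exhausting_incseq_finite:
  assumes S: "S \<subseteq> sets M" "{} \<in> S" "\<And>B C. B \<in> S \<Longrightarrow> C \<in> S \<Longrightarrow> B \<union> C \<in> S"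
  obtains B where "\<And>n. B n \<in> S" "incseq B"
    "\<And>C. C \<in> S \<Longrightarrow> C \<inter> (\<Union>n. B n) = {} \<Longrightarrow> measure M C = 0"
proof (rule incseq_approx_SUP_measure[OF S])
  fix B assume B_S: "\<And>n. B n \<in> S" and "incseq B"
    and B_large: "\<And>n. (SUP C\<in>S. measure M C) - inverse (Suc n) < measure M (B n)"
  show thesis
  proof (rule that[OF B_S \<open>incseq B\<close>])
    fix C assume C: "C \<in> S" "C \<inter> (\<Union>n. B n) = {}"
    show "measure M C = 0"
    proof (rule ccontr)
      assume "measure M C \<noteq> 0"
      then have "0 < measure M C"
        using measure_nonneg[of M C] by linarith
      then obtain n where n: "inverse (Suc n) < measure M C"
        using reals_Archimedean by blast
      have "(SUP C\<in>S. measure M C) < measure M (B n) + measure M C"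
        using B_large[of n] n by linarith
      also have "\<dots> = measure M (B n \<union> C)"
        using C B_S[of n] S(1) by (intro finite_measure_Union[symmetric]) auto
      also have "\<dots> \<le> (SUP C\<in>S. measure M C)"
        by (rule cSUP_upper[OF S(3)[OF B_S C(1)]])
          (rule bdd_aboveI[of _ "measure M (space M)"], use S(1) bounded_measure in auto)
      finally show False
        by simp
    qed
  qed
qed

lemma (in sigma_finite_measure) exhausting_incseq:
  assumes S: "S \<subseteq> sets M" "{} \<in> S" "\<And>B C. B \<in> S \<Longrightarrow> C \<in> S \<Longrightarrow> B \<union> C \<in> S"
  obtains B where "\<And>n. B n \<in> S" "incseq B"
    "\<And>C. C \<in> S \<Longrightarrow> C \<inter> (\<Union>n. B n) = {} \<Longrightarrow> C \<in> null_sets M"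
proof -
  obtain h where h: "h \<in> borel_measurable M" "integral\<^sup>N M h \<noteq> \<infinity>"
    "\<And>x. x \<in> space M \<Longrightarrow> 0 < h x"
    using Ex_finite_integrable_function by blast
  have "emeasure (density M h) (space M) = (\<integral>\<^sup>+ x. h x * indicator (space M) x \<partial>M)"
    by (rule emeasure_density[OF h(1) sets.top])
  also have "\<dots> = integral\<^sup>N M h"
    by (rule nn_integral_cong) simp
  \<comment> \<open>A finite measure with the same null sets as M.\<close>
  finally interpret \<nu>: finite_measure "density M h"
    using h(2) by (intro finite_measureI) simp
  have null: "C \<in> null_sets M" if "C \<in> sets M" "measure (density M h) C = 0" for C
  proof -
    have "C \<in> null_sets (density M h)"
      using that \<nu>.emeasure_eq_measure by (intro null_setsI) auto
    then have "AE x in M. x \<in> C \<longrightarrow> h x = 0"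
      using null_sets_density_iff[OF h(1)] by auto
    then have "AE x in M. x \<notin> C"
      by (rule AE_mp[OF _ AE_I2]) (use h(3) in force)
    then show ?thesis
      using AE_iff_null_sets that(1) by blast
  qed
  have "S \<subseteq> sets (density M h)"
    using S(1) by simp
  then show thesis
  proof (rule \<nu>.exhausting_incseq_finite[OF _ S(2,3)])
    fix B assume B: "\<And>n. B n \<in> S" "incseq B"
      and zero: "\<And>C. C \<in> S \<Longrightarrow> C \<inter> (\<Union>n. B n) = {} \<Longrightarrow> measure (density M h) C = 0"
    show thesis
    proof (rule that[OF B])
      show "C \<in> null_sets M" if "C \<in> S" "C \<inter> (\<Union>n. B n) = {}" for C
        using null[OF _ zero[OF that]] that(1) S(1) by blast
    qed
  qed
qed

lemma is_support_nonvanishing: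
  assumes A: "is_support M Y A" and Z: "Z \<in> sets M" "Z \<subseteq> A" "Z \<notin> null_sets M"
  shows "\<exists>g\<in>Y. \<not> (AE w in M. w \<in> Z \<longrightarrow> g w = 0)"
proof (rule ccontr)
  assume vanishing: "\<not> ?thesis"
  have "AE w in M. w \<notin> space M - Z \<longrightarrow> g w = 0" if "g \<in> Y" for g
  proof -
    have "AE w in M. w \<in> Z \<longrightarrow> g w = 0"
      using vanishing that by blast
    with AE_space show ?thesis
      by eventually_elim auto
  qed
  moreover have "space M - Z \<in> sets M"
    using Z(1) by blast
  ultimately have "AE w in M. w \<in> A \<longrightarrow> w \<in> space M - Z"
    using A unfolding is_support_def by blast
  then have "AE w in M. w \<notin> Z"
    by eventually_elim (use Z(2) in auto)
  then show False
    using Z AE_iff_null_sets by blast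
qed

lemma exists_nonnull_dominated_subset:
  fixes F g :: "'a \<Rightarrow> real"
  assumes F: "F \<in> borel_measurable M" and g: "g \<in> borel_measurable M" and Z: "Z \<in> sets M"
    and nonzero: "\<not> (AE w in M. w \<in> Z \<longrightarrow> g w = 0)"
  obtains n where "{w \<in> Z. \<bar>F w\<bar> \<le> real n * \<bar>g w\<bar>} \<in> sets M"
    "{w \<in> Z. \<bar>F w\<bar> \<le> real n * \<bar>g w\<bar>} \<notin> null_sets M"
proof -
  note [measurable] = F g Z
  define C where "C n = {w \<in> Z. \<bar>F w\<bar> \<le> real n * \<bar>g w\<bar>}" for n
  have C_sets: "C n \<in> sets M" for n
  proof -
    have "C n = Z \<inter> {w \<in> space M. \<bar>F w\<bar> \<le> real n * \<bar>g w\<bar>}"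
      using sets.sets_into_space[OF Z] by (auto simp: C_def)
    then show ?thesis
      by simp
  qed
  have "\<not> (\<forall>n. C n \<in> null_sets M)"
  proof
    assume "\<forall>n. C n \<in> null_sets M"
    then have null: "AE w in M. w \<notin> (\<Union>n. C n)"
      by (intro AE_not_in null_sets_UN) blast
    have cover: "w \<in> (\<Union>n. C n)" if "w \<in> Z" "g w \<noteq> 0" for w
    proof -
      obtain n where "\<bar>F w\<bar> / \<bar>g w\<bar> \<le> real n"
        using real_arch_simple by blast
      then have "\<bar>F w\<bar> \<le> real n * \<bar>g w\<bar>"
        using that(2) by (simp add: divide_le_eq)
      then show ?thesis
        unfolding C_def using that(1) by (intro UN_I[of n]) auto
    qed
    from null have "AE w in M. w \<in> Z \<longrightarrow> g w = 0"
      by eventually_elim (use cover in blast)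
    with nonzero show False ..
  qed
  then show thesis
    using that C_sets unfolding C_def by blast
qed

lemma dist_X_greatest:
  assumes "Y \<noteq> {}" and "\<And>g. g \<in> Y \<Longrightarrow> c \<le> N (\<lambda>w. f w - g w)"
  shows "c \<le> dist_X N f Y"
  unfolding dist_X_def using assms by (rule cINF_greatest)

section \<open>Lattice isometric embeddings of l_infinity\<close>

lemma lattice_isometric_linf_add:
  "lattice_isometric_linf M X N T \<Longrightarrow> bounded (range s) \<Longrightarrow> bounded (range t) \<Longrightarrow>
    AE w in M. T (\<lambda>n. s n + t n) w = T s w + T t w"
  unfolding lattice_isometric_linf_def by blast

lemma lattice_isometric_linf_scale:
  "lattice_isometric_linf M X N T \<Longrightarrow> bounded (range s) \<Longrightarrow>
    AE w in M. T (\<lambda>n. c * s n) w = c * T s w"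
  unfolding lattice_isometric_linf_def by blast

lemma lattice_isometric_linf_max:
  "lattice_isometric_linf M X N T \<Longrightarrow> bounded (range s) \<Longrightarrow> bounded (range t) \<Longrightarrow>
    AE w in M. T (\<lambda>n. max (s n) (t n)) w = max (T s w) (T t w)"
  unfolding lattice_isometric_linf_def by blast

lemma lattice_isometric_linf_mono:
  assumes T: "lattice_isometric_linf M X N T"
    and s: "bounded (range s)" and t: "bounded (range t)" and le: "\<And>n. s n \<le> t n"
  shows "AE w in M. T s w \<le> T t w"
proof -
  have "(\<lambda>n. max (s n) (t n)) = t"
    using le by (simp add: fun_eq_iff max_absorb2)
  then have "AE w in M. T t w = max (T s w) (T t w)"
    using lattice_isometric_linf_max[OF T s t] by simp
  then show ?thesis
    by eventually_elim simp
qed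

lemma lattice_isometric_linf_nonneg:
  assumes T: "lattice_isometric_linf M X N T"
    and s: "bounded (range s)" and nonneg: "\<And>n. 0 \<le> s n"
  shows "AE w in M. 0 \<le> T s w"
proof -
  have "AE w in M. T (\<lambda>_. 0) w = 0"
    using lattice_isometric_linf_scale[OF T s, of 0] by simp
  moreover have "AE w in M. T (\<lambda>_. 0) w \<le> T s w"
    using lattice_isometric_linf_mono[OF T _ s] nonneg by simp
  ultimately show ?thesis
    by eventually_elim simp
qed

lemma lattice_isometric_linf_disjoint:
  assumes T: "lattice_isometric_linf M X N T"
    and s: "bounded (range s)" "\<And>n. 0 \<le> s n" and t: "bounded (range t)" "\<And>n. 0 \<le> t n"
    and disj: "\<And>n. s n = 0 \<or> t n = 0"
  shows "AE w in M. T s w = 0 \<or> T t w = 0"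
proof -
  have "max (s n) (t n) = s n + t n" for n
    using s(2)[of n] t(2)[of n] disj[of n] by (auto simp: max_def)
  then have "AE w in M. T (\<lambda>n. s n + t n) w = max (T s w) (T t w)"
    using lattice_isometric_linf_max[OF T s(1) t(1)] by simp
  with lattice_isometric_linf_add[OF T s(1) t(1)]
    lattice_isometric_linf_nonneg[OF T s] lattice_isometric_linf_nonneg[OF T t]
  show ?thesis
    by eventually_elim (auto simp: max_def split: if_splits)
qed

lemma lattice_isometric_linf_indicator_singleton:
  assumes T: "lattice_isometric_linf M X N T"
  shows "T (indicator {n}) \<in> X" "N (T (indicator {n})) = 1"
    and "AE w in M. 0 \<le> T (indicator {n}) w \<and> T (indicator {n}) w \<le> T (\<lambda>_. 1) w"
    and "n \<noteq> m \<Longrightarrow> AE w in M. T (indicator {n}) w = 0 \<or> T (indicator {m}) w = 0"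
proof -
  have bounded: "bounded (range (indicator {k} :: nat \<Rightarrow> real))" for k
    unfolding bounded_iff by (intro exI[of _ 1]) (auto simp: indicator_def)
  have "(SUP k. \<bar>indicator {n} k :: real\<bar>) = 1"
  proof (rule cSup_eq_maximum)
    show "1 \<in> range (\<lambda>k. \<bar>indicator {n} k :: real\<bar>)"
      by (rule range_eqI[of _ _ n]) simp
  qed (auto simp: indicator_def)
  then show "T (indicator {n}) \<in> X" "N (T (indicator {n})) = 1"
    using T bounded unfolding lattice_isometric_linf_def by auto
  have "AE w in M. 0 \<le> T (indicator {n}) w"
    by (rule lattice_isometric_linf_nonneg[OF T bounded]) simp
  moreover have "AE w in M. T (indicator {n}) w \<le> T (\<lambda>_. 1) w"
    by (rule lattice_isometric_linf_mono[OF T bounded]) (auto simp: indicator_def)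
  ultimately show "AE w in M. 0 \<le> T (indicator {n}) w \<and> T (indicator {n}) w \<le> T (\<lambda>_. 1) w"
    by eventually_elim simp
  show "AE w in M. T (indicator {n}) w = 0 \<or> T (indicator {m}) w = 0" if "n \<noteq> m"
    using that by (intro lattice_isometric_linf_disjoint[OF T] bounded) (auto simp: indicator_def)
qed

section \<open>Banach ideal spaces and their order continuous part\<close>

locale banach_ideal =
  fixes M :: "'a measure" and X :: "('a \<Rightarrow> real) set" and N :: "('a \<Rightarrow> real) \<Rightarrow> real"
  assumes banach_ideal_space: "banach_ideal_space M X N"
begin

abbreviation Xa :: "('a \<Rightarrow> real) set" where
  "Xa \<equiv> order_cont_part M X N"

lemma X_measurable: "f \<in> X \<Longrightarrow> f \<in> borel_measurable M"
  using banach_ideal_space unfolding banach_ideal_space_def by blast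

lemma X_zero: "(\<lambda>_. 0) \<in> X"
  using banach_ideal_space unfolding banach_ideal_space_def by blast

lemma X_add: "f \<in> X \<Longrightarrow> g \<in> X \<Longrightarrow> (\<lambda>w. f w + g w) \<in> X"
  using banach_ideal_space unfolding banach_ideal_space_def by blast

lemma X_scale: "f \<in> X \<Longrightarrow> (\<lambda>w. c * f w) \<in> X"
  using banach_ideal_space unfolding banach_ideal_space_def by blast

lemma X_diff: "f \<in> X \<Longrightarrow> g \<in> X \<Longrightarrow> (\<lambda>w. f w - g w) \<in> X"
  using X_add[OF _ X_scale[of g "-1"]] by simp

lemma N_nonneg: "f \<in> X \<Longrightarrow> 0 \<le> N f"
  using banach_ideal_space unfolding banach_ideal_space_def by blast

lemma N_triangle: "f \<in> X \<Longrightarrow> g \<in> X \<Longrightarrow> N (\<lambda>w. f w + g w) \<le> N f + N g"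
  using banach_ideal_space unfolding banach_ideal_space_def by blast

lemma N_scale: "f \<in> X \<Longrightarrow> N (\<lambda>w. c * f w) = \<bar>c\<bar> * N f"
  using banach_ideal_space unfolding banach_ideal_space_def by blast

lemma N_zero: "N (\<lambda>_. 0) = 0"
  using N_scale[OF X_zero, of 0] by simp

lemma X_ideal_AE:
  "f \<in> borel_measurable M \<Longrightarrow> g \<in> X \<Longrightarrow> AE w in M. \<bar>f w\<bar> \<le> \<bar>g w\<bar> \<Longrightarrow> f \<in> X"
  using banach_ideal_space unfolding banach_ideal_space_def by blast

lemma N_mono_AE:
  "f \<in> borel_measurable M \<Longrightarrow> g \<in> X \<Longrightarrow> AE w in M. \<bar>f w\<bar> \<le> \<bar>g w\<bar> \<Longrightarrow> N f \<le> N g"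
  using banach_ideal_space unfolding banach_ideal_space_def by blast

lemma X_ideal: "f \<in> borel_measurable M \<Longrightarrow> g \<in> X \<Longrightarrow> (\<And>w. \<bar>f w\<bar> \<le> \<bar>g w\<bar>) \<Longrightarrow> f \<in> X"
  using X_ideal_AE by blast

lemma N_mono: "f \<in> borel_measurable M \<Longrightarrow> g \<in> X \<Longrightarrow> (\<And>w. \<bar>f w\<bar> \<le> \<bar>g w\<bar>) \<Longrightarrow> N f \<le> N g"
  using N_mono_AE by blast

lemma X_abs: "f \<in> X \<Longrightarrow> (\<lambda>w. \<bar>f w\<bar>) \<in> X"
  by (rule X_ideal[OF borel_measurable_abs[OF X_measurable]]) auto

lemma N_abs: "f \<in> X \<Longrightarrow> N (\<lambda>w. \<bar>f w\<bar>) = N f"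
  by (intro antisym N_mono X_abs borel_measurable_abs X_measurable) auto

lemma dist_X_le: "f \<in> X \<Longrightarrow> Y \<subseteq> X \<Longrightarrow> g \<in> Y \<Longrightarrow> dist_X N f Y \<le> N (\<lambda>w. f w - g w)"
  unfolding dist_X_def by (rule cINF_lower) (auto intro!: bdd_belowI[of _ 0] N_nonneg X_diff)

lemma order_cont_part_subset: "Xa \<subseteq> X"
  unfolding order_cont_part_def order_continuous_def by blast

lemma order_cont_part_tendsto:
  assumes "x \<in> Xa" and "\<And>n. xs n \<in> borel_measurable M"
    and "\<And>n. AE w in M. 0 \<le> xs n w \<and> xs n w \<le> \<bar>x w\<bar>"
    and "\<And>n. AE w in M. xs (Suc n) w \<le> xs n w"
    and "AE w in M. (\<lambda>n. xs n w) \<longlonglongrightarrow> 0"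
  shows "(\<lambda>n. N (xs n)) \<longlonglongrightarrow> 0"
  using assms unfolding order_cont_part_def order_continuous_def by blast

lemma order_cont_partI:
  assumes "x \<in> X"
    and "\<And>xs. (\<And>n. xs n \<in> borel_measurable M) \<Longrightarrow>
      (\<And>n. AE w in M. 0 \<le> xs n w \<and> xs n w \<le> \<bar>x w\<bar>) \<Longrightarrow>
      (\<And>n. AE w in M. xs (Suc n) w \<le> xs n w) \<Longrightarrow>
      AE w in M. (\<lambda>n. xs n w) \<longlonglongrightarrow> 0 \<Longrightarrow> (\<lambda>n. N (xs n)) \<longlonglongrightarrow> 0"
  shows "x \<in> Xa"
  using assms unfolding order_cont_part_def order_continuous_def by blast

lemma order_cont_part_ideal:
  assumes x: "x \<in> Xa" and y: "y \<in> borel_measurable M" and le: "AE w in M. \<bar>y w\<bar> \<le> \<bar>x w\<bar>"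
  shows "y \<in> Xa"
proof (rule order_cont_partI)
  show "y \<in> X"
    using x y le order_cont_part_subset X_ideal_AE by blast
  fix xs :: "nat \<Rightarrow> 'a \<Rightarrow> real"
  assume "\<And>n. xs n \<in> borel_measurable M"
    and bounds: "\<And>n. AE w in M. 0 \<le> xs n w \<and> xs n w \<le> \<bar>y w\<bar>"
    and "\<And>n. AE w in M. xs (Suc n) w \<le> xs n w" "AE w in M. (\<lambda>n. xs n w) \<longlonglongrightarrow> 0"
  moreover have "AE w in M. 0 \<le> xs n w \<and> xs n w \<le> \<bar>x w\<bar>" for n
    using bounds[of n] le by eventually_elim auto
  ultimately show "(\<lambda>n. N (xs n)) \<longlonglongrightarrow> 0"
    using order_cont_part_tendsto[OF x] by blast
qed

lemma zero_in_order_cont_part: "(\<lambda>_. 0) \<in> Xa"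
proof (rule order_cont_partI[OF X_zero])
  fix xs :: "nat \<Rightarrow> 'a \<Rightarrow> real"
  assume meas: "\<And>n. xs n \<in> borel_measurable M"
    and bounds: "\<And>n. AE w in M. 0 \<le> xs n w \<and> xs n w \<le> \<bar>0\<bar>"
  have "N (xs n) = 0" for n
  proof -
    have "AE w in M. \<bar>xs n w\<bar> \<le> \<bar>0\<bar>"
      using bounds[of n] by eventually_elim auto
    then have "xs n \<in> X" "N (xs n) \<le> N (\<lambda>_. 0)"
      using X_ideal_AE[OF meas X_zero] N_mono_AE[OF meas X_zero] by auto
    then show ?thesis
      using N_nonneg N_zero by (simp add: order.antisym)
  qed
  then show "(\<lambda>n. N (xs n)) \<longlonglongrightarrow> 0"
    by simp
qed

lemma order_cont_part_tendsto_min: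
  assumes x: "x \<in> Xa" and meas: "\<And>n. xs n \<in> borel_measurable M"
    and nonneg: "\<And>n. AE w in M. 0 \<le> xs n w"
    and decr: "\<And>n. AE w in M. xs (Suc n) w \<le> xs n w"
    and lim: "AE w in M. (\<lambda>n. xs n w) \<longlonglongrightarrow> 0"
  shows "(\<lambda>n. N (\<lambda>w. min (xs n w) \<bar>x w\<bar>)) \<longlonglongrightarrow> 0"
proof (rule order_cont_part_tendsto[OF x])
  note [measurable] = meas X_measurable[OF subsetD[OF order_cont_part_subset x]]
  show "(\<lambda>w. min (xs n w) \<bar>x w\<bar>) \<in> borel_measurable M" for n
    by measurable
  show "AE w in M. 0 \<le> min (xs n w) \<bar>x w\<bar> \<and> min (xs n w) \<bar>x w\<bar> \<le> \<bar>x w\<bar>" for n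
    using nonneg[of n] by eventually_elim auto
  show "AE w in M. min (xs (Suc n) w) \<bar>x w\<bar> \<le> min (xs n w) \<bar>x w\<bar>" for n
    using decr[of n] by eventually_elim (auto intro: min.mono)
  show "AE w in M. (\<lambda>n. min (xs n w) \<bar>x w\<bar>) \<longlonglongrightarrow> 0"
    using lim
  proof eventually_elim
    case (elim w)
    show ?case
      using tendsto_min[OF elim tendsto_const, of "\<bar>x w\<bar>"] by simp
  qed
qed

lemma N_le_min_add_min:
  assumes h: "h \<in> borel_measurable M" and x: "x \<in> X" and y: "y \<in> X"
    and bounds: "AE w in M. 0 \<le> h w \<and> h w \<le> \<bar>x w + y w\<bar>"
  shows "N h \<le> N (\<lambda>w. min (h w) \<bar>x w\<bar>) + N (\<lambda>w. min (h w) \<bar>y w\<bar>)"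
proof -
  have min_X: "(\<lambda>w. min (h w) \<bar>z w\<bar>) \<in> X" if "z \<in> X" for z
  proof (rule X_ideal_AE[OF _ that])
    note [measurable] = h X_measurable[OF that]
    show "(\<lambda>w. min (h w) \<bar>z w\<bar>) \<in> borel_measurable M"
      by measurable
    show "AE w in M. \<bar>min (h w) \<bar>z w\<bar>\<bar> \<le> \<bar>z w\<bar>"
      using bounds by eventually_elim auto
  qed
  \<comment> \<open>The excess of h over |x| lies below both h and |y|.\<close>
  have "AE w in M. \<bar>h w\<bar> \<le> \<bar>min (h w) \<bar>x w\<bar> + min (h w) \<bar>y w\<bar>\<bar>"
    using bounds
  proof eventually_elim
    case (elim w)
    then have "h w \<le> \<bar>x w\<bar> + \<bar>y w\<bar>"
      using abs_triangle_ineq[of "x w" "y w"] by linarith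
    with elim show ?case
      by (auto simp: min_def)
  qed
  then have "N h \<le> N (\<lambda>w. min (h w) \<bar>x w\<bar> + min (h w) \<bar>y w\<bar>)"
    by (intro N_mono_AE h X_add min_X x y)
  also have "\<dots> \<le> N (\<lambda>w. min (h w) \<bar>x w\<bar>) + N (\<lambda>w. min (h w) \<bar>y w\<bar>)"
    by (intro N_triangle min_X x y)
  finally show ?thesis .
qed

lemma order_cont_part_add:
  assumes x: "x \<in> Xa" and y: "y \<in> Xa"
  shows "(\<lambda>w. x w + y w) \<in> Xa"
proof (rule order_cont_partI)
  have xX: "x \<in> X" and yX: "y \<in> X"
    using x y order_cont_part_subset by auto
  then show xyX: "(\<lambda>w. x w + y w) \<in> X"
    by (rule X_add)
  fix xs :: "nat \<Rightarrow> 'a \<Rightarrow> real"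
  assume meas: "\<And>n. xs n \<in> borel_measurable M"
    and bounds: "\<And>n. AE w in M. 0 \<le> xs n w \<and> xs n w \<le> \<bar>x w + y w\<bar>"
    and decr: "\<And>n. AE w in M. xs (Suc n) w \<le> xs n w"
    and lim: "AE w in M. (\<lambda>n. xs n w) \<longlonglongrightarrow> 0"
  have nonneg: "AE w in M. 0 \<le> xs n w" for n
    using bounds[of n] by eventually_elim simp
  have lim_sum: "(\<lambda>n. N (\<lambda>w. min (xs n w) \<bar>x w\<bar>) + N (\<lambda>w. min (xs n w) \<bar>y w\<bar>)) \<longlonglongrightarrow> 0"
    using tendsto_add[OF order_cont_part_tendsto_min[OF x meas nonneg decr lim]
        order_cont_part_tendsto_min[OF y meas nonneg decr lim]] by simp
  have "xs n \<in> X" for n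
    using bounds[of n] by (intro X_ideal_AE[OF meas xyX]) (auto elim: eventually_mono)
  then have "0 \<le> N (xs n)" for n
    by (rule N_nonneg)
  with N_le_min_add_min[OF meas xX yX bounds]
  show "(\<lambda>n. N (xs n)) \<longlonglongrightarrow> 0"
    by (intro tendsto_sandwich[OF always_eventually always_eventually tendsto_const lim_sum]) auto
qed

lemma order_cont_part_scale:
  assumes x: "x \<in> Xa"
  shows "(\<lambda>w. c * x w) \<in> Xa"
proof -
  have x_meas: "x \<in> borel_measurable M"
    using x order_cont_part_subset X_measurable by blast
  have multiple: "(\<lambda>w. real n * \<bar>x w\<bar>) \<in> Xa" for n
  proof (induction n)
    case 0
    then show ?case
      using zero_in_order_cont_part by simp
  next
    case (Suc n)
    have "(\<lambda>w. \<bar>x w\<bar>) \<in> Xa"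
      by (rule order_cont_part_ideal[OF x borel_measurable_abs[OF x_meas]]) simp
    from order_cont_part_add[OF Suc this] show ?case
      by (simp add: algebra_simps)
  qed
  obtain n where n: "\<bar>c\<bar> \<le> real n"
    using real_arch_simple by blast
  show ?thesis
  proof (rule order_cont_part_ideal[OF multiple[of n]])
    show "(\<lambda>w. c * x w) \<in> borel_measurable M"
      using x_meas by measurable
    show "AE w in M. \<bar>c * x w\<bar> \<le> \<bar>real n * \<bar>x w\<bar>\<bar>"
      using n by (intro AE_I2) (simp add: abs_mult mult_right_mono)
  qed
qed

lemma order_cont_part_tendsto_indicator:
  assumes g: "g \<in> Xa" and U: "\<And>k. U k \<in> sets M" "decseq U"
    and vanish: "AE w in M. eventually (\<lambda>k. w \<notin> U k) sequentially"
  shows "(\<lambda>k. N (\<lambda>w. \<bar>g w\<bar> * indicator (U k) w)) \<longlonglongrightarrow> 0"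
proof (rule order_cont_part_tendsto[OF g])
  note [measurable] = U(1) X_measurable[OF subsetD[OF order_cont_part_subset g]]
  show "(\<lambda>w. \<bar>g w\<bar> * indicator (U k) w) \<in> borel_measurable M" for k
    by measurable
  show "AE w in M. 0 \<le> \<bar>g w\<bar> * indicator (U k) w \<and> \<bar>g w\<bar> * indicator (U k) w \<le> \<bar>g w\<bar>" for k
    by (intro AE_I2) (auto simp: indicator_def)
  show "AE w in M. \<bar>g w\<bar> * indicator (U (Suc k)) w \<le> \<bar>g w\<bar> * indicator (U k) w" for k
    using U(2) by (intro AE_I2) (auto simp: indicator_def decseq_Suc_iff)
  show "AE w in M. (\<lambda>k. \<bar>g w\<bar> * indicator (U k) w) \<longlonglongrightarrow> 0"
    using vanish
  proof eventually_elim
    case (elim w)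
    then have "eventually (\<lambda>k. \<bar>g w\<bar> * indicator (U k) w = 0) sequentially"
      by (rule eventually_mono) simp
    then show ?case
      by (rule tendsto_eventually)
  qed
qed

end

section \<open>Copies of l_infinity and the distance to the order continuous part\<close>

context banach_ideal
begin

lemma N_le_N_diff_add_tail:
  assumes u: "u \<in> X" and g: "g \<in> X" and e: "e \<in> borel_measurable M" and U: "U \<in> sets M"
    and e_bounds: "AE w in M. 0 \<le> e w \<and> e w \<le> u w"
    and e_support: "\<And>w. w \<in> space M \<Longrightarrow> e w \<noteq> 0 \<Longrightarrow> w \<in> U"
  shows "N e \<le> N (\<lambda>w. u w - g w) + N (\<lambda>w. \<bar>g w\<bar> * indicator U w)"
proof -
  note [measurable] = U X_measurable[OF g]
  have ugX: "(\<lambda>w. \<bar>u w - g w\<bar>) \<in> X"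
    using X_abs X_diff u g by blast
  have tailX: "(\<lambda>w. \<bar>g w\<bar> * indicator U w) \<in> X"
    by (rule X_ideal[OF _ g]) (measurable, auto simp: indicator_def)
  have "AE w in M. \<bar>e w\<bar> \<le> \<bar>\<bar>u w - g w\<bar> + \<bar>g w\<bar> * indicator U w\<bar>"
    using e_bounds AE_space
  proof eventually_elim
    case (elim w)
    show ?case
    proof (cases "e w = 0")
      case False
      with elim show ?thesis
        using e_support[of w] by (simp add: abs_le_iff) arith
    qed simp
  qed
  then have "N e \<le> N (\<lambda>w. \<bar>u w - g w\<bar> + \<bar>g w\<bar> * indicator U w)"
    by (intro N_mono_AE e X_add ugX tailX)
  also have "\<dots> \<le> N (\<lambda>w. u w - g w) + N (\<lambda>w. \<bar>g w\<bar> * indicator U w)"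
    using N_triangle[OF ugX tailX] N_abs[OF X_diff[OF u g]] by simp
  finally show ?thesis .
qed

lemma N_diff_order_cont_part_ge:
  fixes e :: "nat \<Rightarrow> 'a \<Rightarrow> real"
  assumes u: "u \<in> X" and e: "\<And>n. e n \<in> X" "\<And>n. c \<le> N (e n)"
    and e_bounds: "\<And>n. AE w in M. 0 \<le> e n w \<and> e n w \<le> u w"
    and e_disjoint: "\<And>n m. n \<noteq> m \<Longrightarrow> AE w in M. e n w = 0 \<or> e m w = 0"
    and g: "g \<in> Xa"
  shows "c \<le> N (\<lambda>w. u w - g w)"
proof -
  have gX: "g \<in> X"
    using g order_cont_part_subset by blast
  note [measurable] = X_measurable[OF e(1)]
  define U where "U k = (\<Union>j\<in>{k..}. {w \<in> space M. e j w \<noteq> 0})" for k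
  have U_sets: "U k \<in> sets M" for k
    unfolding U_def by measurable
  have "decseq U"
    unfolding decseq_def U_def by (intro allI impI UN_mono) auto
  have "AE w in M. w \<notin> {w \<in> space M. e i w \<noteq> 0} \<or> w \<notin> {w \<in> space M. e j w \<noteq> 0}"
    if "i \<noteq> j" for i j
    using e_disjoint[OF that] by eventually_elim auto
  then have "AE w in M. eventually (\<lambda>k. w \<notin> U k) sequentially"
    unfolding U_def by (rule AE_eventually_notin_tail_Union)
  then have tail: "(\<lambda>k. N (\<lambda>w. \<bar>g w\<bar> * indicator (U k) w)) \<longlonglongrightarrow> 0"
    by (rule order_cont_part_tendsto_indicator[OF g U_sets \<open>decseq U\<close>])
  have "c \<le> N (\<lambda>w. u w - g w) + N (\<lambda>w. \<bar>g w\<bar> * indicator (U k) w)" for k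
  proof -
    have "N (e k) \<le> N (\<lambda>w. u w - g w) + N (\<lambda>w. \<bar>g w\<bar> * indicator (U k) w)"
    proof (rule N_le_N_diff_add_tail[OF u gX _ U_sets e_bounds])
      show "w \<in> U k" if "w \<in> space M" "e k w \<noteq> 0" for w
        unfolding U_def using that by (intro UN_I[of k]) auto
    qed measurable
    then show ?thesis
      using e(2)[of k] by linarith
  qed
  then show ?thesis
    using tendsto_add[OF tendsto_const tail, of "N (\<lambda>w. u w - g w)"]
    by (intro LIMSEQ_le_const[where X = "\<lambda>k. _ + N (\<lambda>w. \<bar>g w\<bar> * indicator (U k) w)"]) auto
qed

lemma exists_dist_one_if_lattice_isometric_linf:
  assumes T: "lattice_isometric_linf M X N T"
  shows "\<exists>f\<in>X. N f = 1 \<and> dist_X N f Xa = 1"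
proof -
  have uX: "T (\<lambda>_. 1) \<in> X" and N_u: "N (T (\<lambda>_. 1)) = 1"
    using T unfolding lattice_isometric_linf_def by auto
  have "1 \<le> N (\<lambda>w. T (\<lambda>_. 1) w - g w)" if "g \<in> Xa" for g
    by (rule N_diff_order_cont_part_ge[where e = "\<lambda>n. T (indicator {n})", OF uX])
      (use lattice_isometric_linf_indicator_singleton[OF T] that in auto)
  then have "1 \<le> dist_X N (T (\<lambda>_. 1)) Xa"
    using zero_in_order_cont_part by (intro dist_X_greatest) auto
  moreover have "dist_X N (T (\<lambda>_. 1)) Xa \<le> 1"
    using dist_X_le[OF uX order_cont_part_subset zero_in_order_cont_part] N_u by simp
  ultimately show ?thesis
    using uX N_u by auto
qed

lemma abs_le_N_if_dominates_pieces:
  assumes h: "h \<in> X" and F: "F \<in> X" and P: "\<And>i. P i \<in> sets M"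
    and dominated: "\<And>i w. w \<in> P i \<Longrightarrow> \<bar>c * F w\<bar> \<le> \<bar>h w\<bar>"
    and pieces: "(\<lambda>i. N (\<lambda>w. F w * indicator (P i) w)) \<longlonglongrightarrow> 1"
  shows "\<bar>c\<bar> \<le> N h"
proof -
  note [measurable] = P X_measurable[OF F]
  have "\<bar>c\<bar> * N (\<lambda>w. F w * indicator (P i) w) \<le> N h" for i
  proof -
    have "(\<lambda>w. F w * indicator (P i) w) \<in> X"
      by (rule X_ideal[OF _ F]) (measurable, auto simp: indicator_def)
    moreover have "N (\<lambda>w. c * (F w * indicator (P i) w)) \<le> N h"
      by (rule N_mono[OF _ h]) (measurable, auto simp: indicator_def dominated)
    ultimately show ?thesis
      using N_scale by simp
  qed
  moreover have "(\<lambda>i. \<bar>c\<bar> * N (\<lambda>w. F w * indicator (P i) w)) \<longlonglongrightarrow> \<bar>c\<bar> * 1"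
    by (intro tendsto_mult tendsto_const pieces)
  ultimately show ?thesis
    by (intro LIMSEQ_le_const2) auto
qed

lemma N_spread_eq_SUP:
  fixes idx :: "'a \<Rightarrow> nat"
  assumes F: "F \<in> X" "\<And>w. 0 \<le> F w" "N F = 1"
    and D: "\<And>j. D j \<in> sets M" and pieces: "(\<lambda>j. N (\<lambda>w. F w * indicator (D j) w)) \<longlonglongrightarrow> 1"
    and idx: "idx \<in> measurable M (count_space UNIV)" "\<And>j w. w \<in> D j \<Longrightarrow> idx w = fst (prod_decode j)"
    and s: "bounded (range s)"
  shows "(\<lambda>w. s (idx w) * F w) \<in> X \<and> N (\<lambda>w. s (idx w) * F w) = (SUP n. \<bar>s n\<bar>)"
proof -
  define K where "K = (SUP n. \<bar>s n\<bar>)"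
  have "bdd_above (range (\<lambda>n. \<bar>s n\<bar>))"
    using s by (auto simp: bounded_iff bdd_above_def)
  then have s_le: "\<bar>s n\<bar> \<le> K" for n
    unfolding K_def by (rule cSUP_upper[OF UNIV_I])
  have T_meas: "(\<lambda>w. s (idx w) * F w) \<in> borel_measurable M"
    using measurable_compose[OF idx(1), of s borel] X_measurable[OF F(1)]
    by (intro borel_measurable_times) auto
  have T_le: "\<bar>s (idx w) * F w\<bar> \<le> \<bar>K * F w\<bar>" for w
    using s_le[of "idx w"] F(2)[of w] by (auto simp: abs_mult intro: mult_right_mono)
  have TX: "(\<lambda>w. s (idx w) * F w) \<in> X"
    by (rule X_ideal[OF T_meas X_scale[OF F(1)] T_le])
  have "N (\<lambda>w. s (idx w) * F w) \<le> N (\<lambda>w. K * F w)"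
    by (rule N_mono[OF T_meas X_scale[OF F(1)] T_le])
  also have "\<dots> = K"
    using N_scale[OF F(1), of K] F(3) s_le[of 0] by simp
  finally have "N (\<lambda>w. s (idx w) * F w) \<le> K" .
  \<comment> \<open>The pieces D (prod_encode (k, i)) all carry the value s k, and they exhaust the tail of D.\<close>
  moreover have "\<bar>s k\<bar> \<le> N (\<lambda>w. s (idx w) * F w)" for k
  proof (rule abs_le_N_if_dominates_pieces[OF TX F(1) D])
    have "filterlim (\<lambda>i. prod_encode (k, i)) at_top sequentially"
      by (rule filterlim_at_top_mono[OF filterlim_ident]) (simp add: le_prod_encode_2)
    then show "(\<lambda>i. N (\<lambda>w. F w * indicator (D (prod_encode (k, i))) w)) \<longlonglongrightarrow> 1"
      by (rule filterlim_compose[OF pieces])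
    show "\<bar>s k * F w\<bar> \<le> \<bar>s (idx w) * F w\<bar>" if "w \<in> D (prod_encode (k, i))" for i w
      using idx(2)[OF that] by simp
  qed
  then have "K \<le> N (\<lambda>w. s (idx w) * F w)"
    unfolding K_def by (intro cSUP_least) auto
  ultimately show ?thesis
    using TX by (simp add: K_def)
qed

lemma lattice_isometric_linf_of_disjoint_pieces:
  assumes F: "F \<in> X" "\<And>w. 0 \<le> F w" "N F = 1"
    and D: "\<And>j. D j \<in> sets M" "disjoint_family D"
    and pieces: "(\<lambda>j. N (\<lambda>w. F w * indicator (D j) w)) \<longlonglongrightarrow> 1"
  shows "lattice_isometric_linf M X N (\<lambda>s w. s (fst (prod_decode (LEAST j. w \<in> D j))) * F w)"
    (is "lattice_isometric_linf M X N ?T")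
proof -
  note [measurable] = D(1)
  \<comment> \<open>Outside all D j the index is the junk value LEAST of an empty set; there only the
    bound by the supremum of |s| matters.\<close>
  define idx where "idx = (\<lambda>w. fst (prod_decode (LEAST j. w \<in> D j)))"
  have idx_piece: "idx w = fst (prod_decode j)" if "w \<in> D j" for w j
  proof -
    have "(LEAST j. w \<in> D j) = j"
    proof (rule Least_equality)
      fix i assume "w \<in> D i"
      then have "i = j"
        using that D(2) unfolding disjoint_family_on_def by blast
      then show "j \<le> i"
        by simp
    qed fact
    then show ?thesis
      by (simp add: idx_def)
  qed
  have "(\<lambda>w. LEAST j. w \<in> D j) \<in> measurable M (count_space UNIV)"
    by measurable
  then have "idx \<in> measurable M (count_space UNIV)"
    unfolding idx_def by (rule measurable_compose) simp
  note norm = N_spread_eq_SUP[OF F D(1) pieces this idx_piece, unfolded idx_def]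
  show ?thesis
    unfolding lattice_isometric_linf_def
  proof (intro conjI allI impI)
    fix s t :: "nat \<Rightarrow> real" and c :: real
    show "bounded (range s) \<Longrightarrow> ?T s \<in> X" "bounded (range s) \<Longrightarrow> N (?T s) = (SUP n. \<bar>s n\<bar>)"
      using norm by blast+
    show "AE w in M. ?T (\<lambda>n. s n + t n) w = ?T s w + ?T t w"
      by (intro AE_I2) (simp add: distrib_right)
    show "AE w in M. ?T (\<lambda>n. c * s n) w = c * ?T s w"
      by (intro AE_I2) (simp add: mult.assoc)
    show "AE w in M. ?T (\<lambda>n. max (s n) (t n)) w = max (?T s w) (?T t w)"
      by (intro AE_I2) (simp add: max_mult_distrib_right F(2))
  qed
qed

lemma order_cont_part_localize:
  assumes A: "is_support M Xa A" and F: "F \<in> borel_measurable M"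
    and Z: "Z \<in> sets M" "Z \<subseteq> A" "Z \<notin> null_sets M"
  obtains C where "C \<in> sets M" "C \<subseteq> Z" "C \<notin> null_sets M" "(\<lambda>w. F w * indicator C w) \<in> Xa"
proof -
  obtain g where g: "g \<in> Xa" and nonzero: "\<not> (AE w in M. w \<in> Z \<longrightarrow> g w = 0)"
    using is_support_nonvanishing[OF A Z] by blast
  have g_meas: "g \<in> borel_measurable M"
    using g order_cont_part_subset X_measurable by blast
  obtain n where C: "{w \<in> Z. \<bar>F w\<bar> \<le> real n * \<bar>g w\<bar>} \<in> sets M"
    "{w \<in> Z. \<bar>F w\<bar> \<le> real n * \<bar>g w\<bar>} \<notin> null_sets M"
    by (rule exists_nonnull_dominated_subset[OF F g_meas Z(1) nonzero])
  show thesis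
  proof (rule that[OF C(1) _ C(2)])
    show "(\<lambda>w. F w * indicator {w \<in> Z. \<bar>F w\<bar> \<le> real n * \<bar>g w\<bar>} w) \<in> Xa"
    proof (rule order_cont_part_ideal[OF order_cont_part_scale[OF g, of "real n"]])
      show "(\<lambda>w. F w * indicator {w \<in> Z. \<bar>F w\<bar> \<le> real n * \<bar>g w\<bar>} w) \<in> borel_measurable M"
        using F C(1) by measurable
      show "AE w in M. \<bar>F w * indicator {w \<in> Z. \<bar>F w\<bar> \<le> real n * \<bar>g w\<bar>} w\<bar> \<le> \<bar>real n * g w\<bar>"
        by (intro AE_I2) (auto simp: indicator_def abs_mult)
    qed
  qed auto
qed

lemma order_cont_part_indicator_Un:
  assumes F: "F \<in> borel_measurable M"
    and B: "B \<in> sets M" "(\<lambda>w. F w * indicator B w) \<in> Xa"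
    and C: "C \<in> sets M" "(\<lambda>w. F w * indicator C w) \<in> Xa"
  shows "(\<lambda>w. F w * indicator (B \<union> C) w) \<in> Xa"
proof (rule order_cont_part_ideal[OF order_cont_part_add[OF B(2) C(2)]])
  show "(\<lambda>w. F w * indicator (B \<union> C) w) \<in> borel_measurable M"
    using F B(1) C(1) by measurable
  show "AE w in M. \<bar>F w * indicator (B \<union> C) w\<bar> \<le> \<bar>F w * indicator B w + F w * indicator C w\<bar>"
    by (intro AE_I2) (auto simp: indicator_def)
qed

lemma order_cont_part_exhaustion:
  assumes "sigma_finite_measure M" and A: "is_support M Xa A" "is_support M X A" and F: "F \<in> X"
  obtains B where "\<And>n. B n \<in> sets M" "incseq B" "\<And>n. (\<lambda>w. F w * indicator (B n) w) \<in> Xa"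
    "AE w in M. F w \<noteq> 0 \<longrightarrow> (\<exists>n. w \<in> B n)"
proof -
  interpret sigma_finite_measure M by fact
  note [measurable] = X_measurable[OF F]
  define S where "S = {B \<in> sets M. (\<lambda>w. F w * indicator B w) \<in> Xa}"
  have S_sets: "S \<subseteq> sets M"
    by (auto simp: S_def)
  have "{} \<in> S"
    using zero_in_order_cont_part by (simp add: S_def)
  moreover have "B \<union> C \<in> S" if "B \<in> S" "C \<in> S" for B C
    using that order_cont_part_indicator_Un[OF X_measurable[OF F]] by (auto simp: S_def)
  ultimately show thesis
  proof (rule exhausting_incseq[OF S_sets])
    fix B assume B: "\<And>n. B n \<in> S" "incseq B"
      and maximal: "\<And>C. C \<in> S \<Longrightarrow> C \<inter> (\<Union>n. B n) = {} \<Longrightarrow> C \<in> null_sets M"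
    have B_sets: "B n \<in> sets M" for n
      using B(1) S_sets by blast
    have A_sets: "A \<in> sets M"
      using A(1) unfolding is_support_def by blast
    define Z where "Z = {w \<in> space M. F w \<noteq> 0} \<inter> A - (\<Union>n. B n)"
    have Z_sets: "Z \<in> sets M"
      using B_sets A_sets unfolding Z_def by measurable
    have "Z \<in> null_sets M"
    proof (rule ccontr)
      assume "Z \<notin> null_sets M"
      moreover have "Z \<subseteq> A"
        by (auto simp: Z_def)
      ultimately obtain C where "C \<in> sets M" "C \<subseteq> Z" "C \<notin> null_sets M"
        "(\<lambda>w. F w * indicator C w) \<in> Xa"
        using order_cont_part_localize[OF A(1) X_measurable[OF F] Z_sets] by blast
      then show False
        using maximal[of C] by (auto simp: S_def Z_def)
    qed
    then have "AE w in M. w \<notin> Z"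
      by (rule AE_not_in)
    moreover have "AE w in M. w \<notin> A \<longrightarrow> F w = 0"
      using A(2) F unfolding is_support_def by blast
    ultimately have "AE w in M. F w \<noteq> 0 \<longrightarrow> (\<exists>n. w \<in> B n)"
      using AE_space by eventually_elim (auto simp: Z_def)
    then show thesis
      using that B_sets B(1,2) unfolding S_def by blast
  qed
qed

lemma semi_fatou_tendsto_indicator:
  assumes "semi_fatou M X N" and F: "F \<in> X" "\<And>w. 0 \<le> F w"
    and B: "\<And>n. B n \<in> sets M" "incseq B" "AE w in M. F w \<noteq> 0 \<longrightarrow> (\<exists>n. w \<in> B n)"
  shows "(\<lambda>n. N (\<lambda>w. F w * indicator (B n) w)) \<longlonglongrightarrow> N F"
proof (rule assms(1)[unfolded semi_fatou_def, rule_format, OF _ F(1)])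
  note [measurable] = B(1) X_measurable[OF F(1)]
  show "(\<lambda>w. F w * indicator (B n) w) \<in> X" for n
    by (rule X_ideal[OF _ F(1)]) (auto simp: indicator_def)
  show "AE w in M. 0 \<le> F w * indicator (B n) w \<and>
      F w * indicator (B n) w \<le> F w * indicator (B (Suc n)) w" for n
    using F(2) B(2) by (intro AE_I2) (auto simp: indicator_def incseq_Suc_iff)
  show "AE w in M. (\<lambda>n. F w * indicator (B n) w) \<longlonglongrightarrow> F w"
    using B(3)
  proof eventually_elim
    case (elim w)
    have "eventually (\<lambda>n. F w * indicator (B n) w = F w) sequentially"
    proof (cases "F w = 0")
      case False
      then obtain j where "w \<in> B j"
        using elim by blast
      then have "w \<in> B n" if "j \<le> n" for n
        using B(2) that by (auto simp: incseq_def)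
      then show ?thesis
        unfolding eventually_sequentially by (intro exI[of _ j]) auto
    qed simp
    then show ?case
      by (rule tendsto_eventually)
  qed
qed

lemma dist_X_le_abs:
  assumes f: "f \<in> X" and g: "g \<in> Xa"
  shows "dist_X N f Xa \<le> N (\<lambda>w. \<bar>f w\<bar> - g w)"
proof -
  have gX: "g \<in> X"
    using g order_cont_part_subset by blast
  note [measurable] = X_measurable[OF f] X_measurable[OF gX]
  \<comment> \<open>f - sgn f * g = sgn f * (|f| - g)\<close>
  have "(\<lambda>w. sgn (f w) * g w) \<in> Xa"
  proof (rule order_cont_part_ideal[OF g])
    show "(\<lambda>w. sgn (f w) * g w) \<in> borel_measurable M"
      by measurable
    show "AE w in M. \<bar>sgn (f w) * g w\<bar> \<le> \<bar>g w\<bar>"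
      by (intro AE_I2) (auto simp: abs_mult abs_sgn_eq)
  qed
  then have "dist_X N f Xa \<le> N (\<lambda>w. f w - sgn (f w) * g w)"
    by (rule dist_X_le[OF f order_cont_part_subset])
  also have "\<dots> \<le> N (\<lambda>w. \<bar>f w\<bar> - g w)"
  proof (rule N_mono)
    show "(\<lambda>w. f w - sgn (f w) * g w) \<in> borel_measurable M"
      by measurable
    show "(\<lambda>w. \<bar>f w\<bar> - g w) \<in> X"
      by (intro X_diff X_abs f gX)
    show "\<bar>f w - sgn (f w) * g w\<bar> \<le> \<bar>\<bar>f w\<bar> - g w\<bar>" for w
      by (cases "f w" "0::real" rule: linorder_cases) (auto simp: abs_if)
  qed
  finally show ?thesis .
qed

lemma lattice_isometric_linf_if_dist_eq_one:
  assumes "sigma_finite_measure M" "semi_fatou M X N" "is_support M Xa A" "is_support M X A"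
    and f: "f \<in> X" "N f = 1" "dist_X N f Xa = 1"
  shows "\<exists>T. lattice_isometric_linf M X N T"
proof -
  define F where "F w = \<bar>f w\<bar>" for w
  have F: "F \<in> X" "\<And>w. 0 \<le> F w" "N F = 1"
    using X_abs N_abs f unfolding F_def by auto
  obtain B where B: "\<And>n. B n \<in> sets M" "incseq B" "\<And>n. (\<lambda>w. F w * indicator (B n) w) \<in> Xa"
    "AE w in M. F w \<noteq> 0 \<longrightarrow> (\<exists>n. w \<in> B n)"
    using order_cont_part_exhaustion[OF assms(1,3,4) F(1)] by blast
  define G where "G n = (\<lambda>w. F w - F w * indicator (B n) w)" for n
  have G: "G n \<in> X" "\<And>w. 0 \<le> G n w" for n
    using X_diff[OF F(1) subsetD[OF order_cont_part_subset B(3)]] F(2)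
    by (auto simp: G_def indicator_def)
  \<comment> \<open>F - G n lies in X_a, so N (G n) \<ge> dist (f, X_a) = 1.\<close>
  have N_G: "N (G n) = 1" for n
  proof (rule antisym)
    show "N (G n) \<le> 1"
      using N_mono[OF X_measurable[OF G(1)] F(1)] F(2,3) by (auto simp: G_def indicator_def)
    show "1 \<le> N (G n)"
      using dist_X_le_abs[OF f(1) B(3)] f(3) by (simp add: F_def G_def)
  qed
  have "(\<lambda>m. N (\<lambda>w. F w * indicator (B m - B n) w)) \<longlonglongrightarrow> 1" for n
  proof -
    have "AE w in M. G n w \<noteq> 0 \<longrightarrow> (\<exists>m. w \<in> B m)"
      using B(4) by eventually_elim (auto simp: G_def)
    then have "(\<lambda>m. N (\<lambda>w. G n w * indicator (B m) w)) \<longlonglongrightarrow> 1"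
      using semi_fatou_tendsto_indicator[OF assms(2) G B(1,2)] N_G by simp
    moreover have "(\<lambda>w. G n w * indicator (B m) w) = (\<lambda>w. F w * indicator (B m - B n) w)" for m
      by (auto simp: fun_eq_iff G_def indicator_def)
    ultimately show ?thesis
      by simp
  qed
  then obtain r where r: "strict_mono r"
    and pieces: "(\<lambda>j. N (\<lambda>w. F w * indicator (B (r (Suc j)) - B (r j)) w)) \<longlonglongrightarrow> 1"
    by (rule tendsto_consecutive_subseq)
  have "disjoint_family (\<lambda>j. B (r (Suc j)) - B (r j))"
    using B(2) strict_mono_mono[OF r] by (rule disjoint_family_incseq_diff)
  then show ?thesis
    using lattice_isometric_linf_of_disjoint_pieces[OF F _ _ pieces] B(1) by blast
qed

end

theorem theorem2p1:
  fixes M :: "'a measure" and X :: "('a \<Rightarrow> real) set" and N :: "('a \<Rightarrow> real) \<Rightarrow> real"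
  assumes "complete_sigma_finite M"
    and "banach_ideal_space M X N"
    and "semi_fatou M X N"
    and "\<exists>A. is_support M (order_cont_part M X N) A \<and> is_support M X A"
  shows "(\<exists>T. lattice_isometric_linf M X N T) \<longleftrightarrow>
         (\<exists>f\<in>X. N f = 1 \<and> dist_X N f (order_cont_part M X N) = 1)"
proof -
  interpret banach_ideal M X N
    by (rule banach_ideal.intro) (fact assms(2))
  have "sigma_finite_measure M"
    using assms(1) unfolding complete_sigma_finite_def by blast
  moreover obtain A where "is_support M Xa A" "is_support M X A"
    using assms(4) by blast
  ultimately show ?thesis
    using exists_dist_one_if_lattice_isometric_linf
      lattice_isometric_linf_if_dist_eq_one[OF _ assms(3)] by blast
qed

end
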